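(* Let $c$ be a positive integer, $\langle H,M,T\rangle$ an abduction instance with $H=\{h_1,\ldots,h_{|H|}\}$, $r=|Var(T)\setminus H|$ with the variables of $T$ outside $H$ named $x_1,\ldots,x_r$, and \[g_c(\langle H,M,T\rangle)=\langle H\cup\{h_{|H|+1},\ldots,h_c\},\,M,\,T\cup\{x_{r+1}\vee\neg x_{r+1},\ldots,x_c\vee\neg x_c\}\rangle\] with fresh variables $h_{|H|+1},\ldots,h_c,x_{r+1},\ldots,x_c$. If $\preceq$ is an irredundant ordering, then $SOL_\preceq(g_c(\langle H,M,T\rangle))=SOL_\preceq(\langle H,M,T\rangle)$.
   Context: An abduction instance is a triple $\langle H,M,T\rangle$ where $T$ is a propositional theory in 3CNF, $H$ a set of propositional variables, $M$ a set of propositional variables. $SOL(H,M,T)=\{H'\subseteq H\mid H'\cup T\text{ consistent and } H'\cup T\models M\}$. An ordering $\preceq$ is a well-founded preorder on sets of variables; $SOL_\preceq(H,M,T)$ is the set of $H'\in SOL(H,M,T)$ such that no $H''\in SOL(H,M,T)$ satisfies $H''\prec H'$. The ordering is irredundant if $H'\subset H''$ implies $H'\prec H''$. $Var(T)$ is the set of variables occurring in $T$. *)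

theory Defs
  imports Main
begin

datatype 'v lit = Pos 'v | Neg 'v

type_synonym 'v clause = "'v lit set"
type_synonym 'v cnf = "'v clause set"

fun lit_var :: "'v lit \<Rightarrow> 'v" where
  "lit_var (Pos x) = x" | "lit_var (Neg x) = x"

fun sat_lit :: "('v \<Rightarrow> bool) \<Rightarrow> 'v lit \<Rightarrow> bool" where
  "sat_lit a (Pos x) = a x" | "sat_lit a (Neg x) = (\<not> a x)"

definition models :: "('v \<Rightarrow> bool) \<Rightarrow> 'v cnf \<Rightarrow> bool" where
  "models a T \<longleftrightarrow> (\<forall>C\<in>T. \<exists>l\<in>C. sat_lit a l)"

definition is_3cnf :: "'v cnf \<Rightarrow> bool" where
  "is_3cnf T \<longleftrightarrow> finite T \<and> (\<forall>C\<in>T. finite C \<and> 1 \<le> card C \<and> card C \<le> 3)"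

definition Var :: "'v cnf \<Rightarrow> 'v set" where
  "Var T = (\<Union>C\<in>T. lit_var ` C)"

text \<open>H' \<union> T consistent (variables of H' read as positive unit facts).\<close>
definition consistent :: "'v set \<Rightarrow> 'v cnf \<Rightarrow> bool" where
  "consistent H' T \<longleftrightarrow> (\<exists>a. (\<forall>h\<in>H'. a h) \<and> models a T)"

definition entails :: "'v set \<Rightarrow> 'v cnf \<Rightarrow> 'v set \<Rightarrow> bool" where
  "entails H' T M \<longleftrightarrow> (\<forall>a. (\<forall>h\<in>H'. a h) \<and> models a T \<longrightarrow> (\<forall>m\<in>M. a m))"

type_synonym 'v abd_inst = "'v set \<times> 'v set \<times> 'v cnf"

definition abduction_instance :: "'v abd_inst \<Rightarrow> bool" where
  "abduction_instance I = (case I of (H, M, T) \<Rightarrow> finite H \<and> is_3cnf T)"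

definition SOL :: "'v abd_inst \<Rightarrow> 'v set set" where
  "SOL I = (case I of (H, M, T) \<Rightarrow>
     {H'. H' \<subseteq> H \<and> consistent H' T \<and> entails H' T M})"

definition strict :: "('a \<Rightarrow> 'a \<Rightarrow> bool) \<Rightarrow> 'a \<Rightarrow> 'a \<Rightarrow> bool" where
  "strict le A B \<longleftrightarrow> le A B \<and> \<not> le B A"

definition ordering_wf :: "('v set \<Rightarrow> 'v set \<Rightarrow> bool) \<Rightarrow> bool" where
  "ordering_wf le \<longleftrightarrow> (\<forall>A. le A A) \<and> (\<forall>A B C. le A B \<longrightarrow> le B C \<longrightarrow> le A C)
     \<and> wfP (strict le)"

definition irredundant :: "('v set \<Rightarrow> 'v set \<Rightarrow> bool) \<Rightarrow> bool" where
  "irredundant le \<longleftrightarrow> (\<forall>A B. A \<subset> B \<longrightarrow> strict le A B)"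

definition SOL_ord :: "('v set \<Rightarrow> 'v set \<Rightarrow> bool) \<Rightarrow> 'v abd_inst \<Rightarrow> 'v set set" where
  "SOL_ord le I = {H' \<in> SOL I. \<not> (\<exists>H''\<in>SOL I. strict le H'' H')}"

text \<open>g_c with the fresh hypotheses NH = {h_{|H|+1},...,h_c} and
  fresh variables NX = {x_{r+1},...,x_c}.\<close>
definition g_inst :: "'v set \<Rightarrow> 'v set \<Rightarrow> 'v abd_inst \<Rightarrow> 'v abd_inst" where
  "g_inst NH NX I = (case I of (H, M, T) \<Rightarrow>
     (H \<union> NH, M, T \<union> {{Pos x, Neg x} | x. x \<in> NX}))"

end

theory Submission
  imports Defs
begin

text \<open>The tautologies x \<or> \<not> x added by g_c do not constrain any assignment, so the padded
  instance is the original one with the fresh hypotheses NH adjoined. Since these occur neither in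
  T nor in M, setting them to true turns a countermodel of X - NH into one of X; hence removing
  them from a solution leaves a solution. Every solution of the padded instance therefore
  contains one of the original instance, and an irredundant ordering prefers it strictly unless
  the two coincide.\<close>

lemma models_Un_tautologies:
  "models a (T \<union> {{Pos x, Neg x} | x. x \<in> NX}) = models a T"
  unfolding models_def by auto

lemma SOL_g_inst: "SOL (g_inst NH NX (H, M, T)) = SOL (H \<union> NH, M, T)"
  unfolding SOL_def g_inst_def consistent_def entails_def
  by (simp only: models_Un_tautologies prod.case)

lemma SOL_mono_hyps: "H \<subseteq> H' \<Longrightarrow> SOL (H, M, T) \<subseteq> SOL (H', M, T)"
  unfolding SOL_def by auto

lemma models_cong:
  assumes "\<And>v. v \<in> Var T \<Longrightarrow> a v = b v"
  shows "models a T = models b T"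
proof -
  have "sat_lit a l = sat_lit b l" if "C \<in> T" "l \<in> C" for C l
  proof -
    have "lit_var l \<in> Var T" using that unfolding Var_def by blast
    then show ?thesis using assms by (cases l) auto
  qed
  then show ?thesis unfolding models_def by blast
qed

lemma SOL_Diff_fresh_hyps:
  assumes fresh: "N \<inter> (M \<union> Var T) = {}" and X: "X \<in> SOL (H \<union> N, M, T)"
  shows "X - N \<in> SOL (H, M, T)"
proof -
  have "\<forall>m\<in>M. a m" if a: "\<forall>h\<in>X - N. a h" "models a T" for a
  proof -
    let ?a = "\<lambda>v. v \<in> N \<or> a v"
    have "models ?a T" using a(2) models_cong[of T ?a a] fresh by blast
    moreover have "\<forall>h\<in>X. ?a h" using a(1) by blast
    ultimately have "\<forall>m\<in>M. ?a m" using X unfolding SOL_def entails_def by auto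
    then show ?thesis using fresh by blast
  qed
  moreover have "consistent (X - N) T" using X unfolding SOL_def consistent_def by blast
  ultimately show ?thesis using X unfolding SOL_def entails_def by auto
qed

lemma minimal_elements_eq_if_dominated:
  assumes trans: "\<And>A B C. le A B \<Longrightarrow> le B C \<Longrightarrow> le A C" and "irredundant le"
    and "S \<subseteq> S'" and dominated: "\<And>X. X \<in> S' \<Longrightarrow> \<exists>Y\<in>S. Y \<subseteq> X"
  shows "{X \<in> S'. \<not> (\<exists>Y\<in>S'. strict le Y X)} = {X \<in> S. \<not> (\<exists>Y\<in>S. strict le Y X)}"
proof -
  have psubset: "strict le A B" if "A \<subset> B" for A B
    using \<open>irredundant le\<close> that unfolding irredundant_def by blast
  have "X \<in> S" if "X \<in> S'" "\<not> (\<exists>Y\<in>S'. strict le Y X)" for X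
    using dominated[OF that(1)] that(2) psubset \<open>S \<subseteq> S'\<close> by (metis psubsetI subsetD)
  moreover have "\<not> strict le Y X"
    if "X \<in> S" "\<not> (\<exists>Y\<in>S. strict le Y X)" "Y \<in> S'" for X Y
  proof
    assume YX: "strict le Y X"
    obtain Z where "Z \<in> S" "Z \<subseteq> Y" using dominated[OF \<open>Y \<in> S'\<close>] by blast
    moreover have "strict le Z Y" if "Z \<noteq> Y" using psubset \<open>Z \<subseteq> Y\<close> that by blast
    ultimately have "strict le Z X"
      using YX trans unfolding strict_def by (cases "Z = Y") blast+
    then show False using that \<open>Z \<in> S\<close> by blast
  qed
  ultimately show ?thesis using \<open>S \<subseteq> S'\<close> by blast
qed

theorem lemma4:
  fixes c :: nat and H M :: "'v set" and T :: "'v cnf"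
    and NH NX :: "'v set" and le :: "'v set \<Rightarrow> 'v set \<Rightarrow> bool"
  assumes "c \<ge> 1"
    and "abduction_instance (H, M, T)"
    and "finite NH" "card NH = c - card H" "NH \<inter> (H \<union> M \<union> Var T) = {}"
    and "finite NX" "card NX = c - card (Var T - H)"
    and "NX \<inter> (H \<union> M \<union> Var T \<union> NH) = {}"
    and "ordering_wf le" "irredundant le"
  shows "SOL_ord le (g_inst NH NX (H, M, T)) = SOL_ord le (H, M, T)"
proof -
  have trans: "\<And>A B C. le A B \<Longrightarrow> le B C \<Longrightarrow> le A C"
    using \<open>ordering_wf le\<close> unfolding ordering_wf_def by blast
  have fresh: "NH \<inter> (M \<union> Var T) = {}" using assms(5) by blast
  have dominated: "\<exists>Y\<in>SOL (H, M, T). Y \<subseteq> X" if "X \<in> SOL (H \<union> NH, M, T)" for X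
    using SOL_Diff_fresh_hyps[OF fresh that] by blast
  have "SOL (H, M, T) \<subseteq> SOL (H \<union> NH, M, T)" by (rule SOL_mono_hyps) blast
  from minimal_elements_eq_if_dominated[OF trans \<open>irredundant le\<close> this dominated]
  show ?thesis unfolding SOL_ord_def SOL_g_inst .
qed

end
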